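(* Let $\mathcal I'$ be an SMI instance, $a^*$ an agent, and let $\mathcal I^{a^*}$ be the instance arising from $\mathcal I'$ by replacing the preference list of $a^*$ by an arbitrary strict order over an arbitrary set of agents of the opposite gender (reordering and extending it arbitrarily). Then there is at most one man $m$ and at most one woman $w$ such that $m,w\notin\mathrm{ma}(\mathcal I')$ and $m,w\in\mathrm{ma}(\mathcal I^{a^*})$.
   Context: In a Stable Marriage with Incomplete Lists (SMI) instance there are men $U$ and women $W$, and each agent has a strict preference list over a subset of the agents of opposite gender; $m,w$ are mutually acceptable if each appears in the other's list. A matching is a set of mutually acceptable man–woman pairs in which each agent appears at most once. A mutually acceptable pair $\{m,w\}$ blocks a matching $M$ if ($m$ is unassigned or prefers $w$ to his partner) and ($w$ is unassigned or prefers $m$ to her partner); $M$ is stable if no pair blocks it. By the Rural Hospitals Theorem all stable matchings of an SMI instance assign the same set of agents; $\mathrm{ma}(\mathcal I)$ denotes this set of agents matched in the stable matchings of $\mathcal I$. *)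

theory Defs
  imports Main
begin

text \<open>An SMI instance: disjoint finite sets U (men) and W (women) of agents of type 'a,
  and a preference function pref giving each agent a strict order (a distinct list,
  most preferred first) over a subset of the agents of the opposite gender.\<close>

definition smi_instance :: "'a set \<Rightarrow> 'a set \<Rightarrow> ('a \<Rightarrow> 'a list) \<Rightarrow> bool" where
  "smi_instance U W pref \<longleftrightarrow> finite U \<and> finite W \<and> U \<inter> W = {} \<and>
     (\<forall>m\<in>U. distinct (pref m) \<and> set (pref m) \<subseteq> W) \<and>
     (\<forall>w\<in>W. distinct (pref w) \<and> set (pref w) \<subseteq> U)"

definition mutually_acceptable :: "('a \<Rightarrow> 'a list) \<Rightarrow> 'a \<Rightarrow> 'a \<Rightarrow> bool" where
  "mutually_acceptable pref m w \<longleftrightarrow> w \<in> set (pref m) \<and> m \<in> set (pref w)"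

definition prefers :: "('a \<Rightarrow> 'a list) \<Rightarrow> 'a \<Rightarrow> 'a \<Rightarrow> 'a \<Rightarrow> bool" where
  "prefers pref a x y \<longleftrightarrow>
     (\<exists>i j. i < j \<and> j < length (pref a) \<and> pref a ! i = x \<and> pref a ! j = y)"

definition is_matching :: "'a set \<Rightarrow> 'a set \<Rightarrow> ('a \<Rightarrow> 'a list) \<Rightarrow> ('a \<times> 'a) set \<Rightarrow> bool" where
  "is_matching U W pref M \<longleftrightarrow> M \<subseteq> U \<times> W \<and>
     (\<forall>(m, w)\<in>M. mutually_acceptable pref m w) \<and>
     (\<forall>m w w'. (m, w) \<in> M \<and> (m, w') \<in> M \<longrightarrow> w = w') \<and>
     (\<forall>m m' w. (m, w) \<in> M \<and> (m', w) \<in> M \<longrightarrow> m = m')"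

definition matched :: "('a \<times> 'a) set \<Rightarrow> 'a \<Rightarrow> bool" where
  "matched M a \<longleftrightarrow> (\<exists>b. (a, b) \<in> M \<or> (b, a) \<in> M)"

definition blocks :: "'a set \<Rightarrow> 'a set \<Rightarrow> ('a \<Rightarrow> 'a list) \<Rightarrow> ('a \<times> 'a) set \<Rightarrow> 'a \<Rightarrow> 'a \<Rightarrow> bool" where
  "blocks U W pref M m w \<longleftrightarrow> m \<in> U \<and> w \<in> W \<and> mutually_acceptable pref m w \<and>
     (\<not> matched M m \<or> (\<exists>w'. (m, w') \<in> M \<and> prefers pref m w w')) \<and>
     (\<not> matched M w \<or> (\<exists>m'. (m', w) \<in> M \<and> prefers pref w m m'))"

definition stable :: "'a set \<Rightarrow> 'a set \<Rightarrow> ('a \<Rightarrow> 'a list) \<Rightarrow> ('a \<times> 'a) set \<Rightarrow> bool" where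
  "stable U W pref M \<longleftrightarrow> is_matching U W pref M \<and> (\<nexists>m w. blocks U W pref M m w)"

text \<open>ma(I): agents matched in the stable matchings (by the Rural Hospitals Theorem
  all stable matchings match the same agents, so "some" = "every").\<close>
definition ma :: "'a set \<Rightarrow> 'a set \<Rightarrow> ('a \<Rightarrow> 'a list) \<Rightarrow> 'a set" where
  "ma U W pref = {a. \<exists>M. stable U W pref M \<and> matched M a}"

end

theory Submission
  imports Defs
begin

text \<open>Let \<open>M\<close> be stable before and \<open>M'\<close> stable after the change of the list of \<open>a*\<close>. From a man
  \<open>m\<close> unmatched in \<open>M\<close> but matched in \<open>M'\<close> follow the alternating walk: his \<open>M'\<close>-partner, her
  \<open>M\<close>-partner, his \<open>M'\<close>-partner, and so on. As long as no agent on it is \<open>a*\<close>, stability of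
  \<open>M\<close> and \<open>M'\<close> forces every man on the walk to strictly prefer his \<open>M'\<close>-partner to his
  \<open>M\<close>-partner, so the walk continues; it never revisits a man, so by finiteness it must reach
  \<open>a*\<close>. It stops at \<open>a*\<close> or at the \<open>M'\<close>-partner of \<open>a*\<close>, a single man; walking back from
  him is deterministic, so only one newly matched man can start such a walk. Women follow by
  exchanging the sexes. The same walk with nobody changed proves that all stable matchings
  match the same men, and existence of stable matchings comes from deferred acceptance.\<close>

lemma prefers_set: "prefers p a x y \<Longrightarrow> x \<in> set (p a) \<and> y \<in> set (p a)"
  unfolding prefers_def by auto

lemma prefers_irrefl: "distinct (p a) \<Longrightarrow> \<not> prefers p a x x"
  unfolding prefers_def using nth_eq_iff_index_eq by fastforce

lemma prefers_asym: "distinct (p a) \<Longrightarrow> prefers p a x y \<Longrightarrow> \<not> prefers p a y x"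
  unfolding prefers_def by (metis less_trans nth_eq_iff_index_eq order_less_asym)

lemma prefers_trans:
  "distinct (p a) \<Longrightarrow> prefers p a x y \<Longrightarrow> prefers p a y z \<Longrightarrow> prefers p a x z"
  unfolding prefers_def by (metis less_trans nth_eq_iff_index_eq)

lemma prefers_total:
  "x \<in> set (p a) \<Longrightarrow> y \<in> set (p a) \<Longrightarrow> x \<noteq> y \<Longrightarrow> prefers p a x y \<or> prefers p a y x"
  unfolding prefers_def in_set_conv_nth by (metis linorder_neqE_nat)

lemma prefers_cong: "p' a = p a \<Longrightarrow> prefers p' a = prefers p a"
  unfolding prefers_def by simp

lemma mutually_acceptable_cong:
  "p' m = p m \<Longrightarrow> p' w = p w \<Longrightarrow> mutually_acceptable p' m w = mutually_acceptable p m w"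
  unfolding mutually_acceptable_def by simp

lemma prefers_maximal:
  assumes "distinct (p a)" "b \<in> A" "A \<subseteq> set (p a)"
  shows "\<exists>c\<in>A. \<forall>c'\<in>A. \<not> prefers p a c' c"
proof -
  define Q where "Q i \<longleftrightarrow> i < length (p a) \<and> p a ! i \<in> A" for i
  have "\<exists>i. Q i" using assms(2,3) unfolding Q_def by (metis in_set_conv_nth subsetD)
  then obtain i where Qi: "Q i" and least: "\<And>i'. i' < i \<Longrightarrow> \<not> Q i'"
    using exists_least_iff[of Q] by blast
  have "\<not> prefers p a c' (p a ! i)" if "c' \<in> A" for c'
  proof
    assume "prefers p a c' (p a ! i)"
    then obtain i' j where "i' < j" "j < length (p a)" "p a ! i' = c'" "p a ! j = p a ! i"
      unfolding prefers_def by blast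
    moreover from this have "j = i" using Qi assms(1) nth_eq_iff_index_eq unfolding Q_def by metis
    ultimately show False using least that unfolding Q_def by auto
  qed
  then show ?thesis using Qi unfolding Q_def by blast
qed

lemma smi_instance_distinct: "smi_instance U W p \<Longrightarrow> a \<in> U \<union> W \<Longrightarrow> distinct (p a)"
  unfolding smi_instance_def by blast

lemma smi_instance_pref_men: "smi_instance U W p \<Longrightarrow> m \<in> U \<Longrightarrow> set (p m) \<subseteq> W"
  unfolding smi_instance_def by blast

lemma smi_instance_disjoint: "smi_instance U W p \<Longrightarrow> U \<inter> W = {}"
  unfolding smi_instance_def by blast

lemma smi_instance_swap: "smi_instance U W p \<Longrightarrow> smi_instance W U p"
  unfolding smi_instance_def by blast

lemma smi_instance_update:
  assumes "smi_instance U W p" "distinct L" "set L \<subseteq> (if a \<in> U then W else U)"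
  shows "smi_instance U W (p(a := L))"
  using assms unfolding smi_instance_def by (auto split: if_splits)

lemma matching_unique_woman: "is_matching U W p M \<Longrightarrow> (m, w) \<in> M \<Longrightarrow> (m, w') \<in> M \<Longrightarrow> w = w'"
  unfolding is_matching_def by blast

lemma matching_unique_man: "is_matching U W p M \<Longrightarrow> (m, w) \<in> M \<Longrightarrow> (m', w) \<in> M \<Longrightarrow> m = m'"
  unfolding is_matching_def by blast

lemma matching_memD:
  "is_matching U W p M \<Longrightarrow> (m, w) \<in> M \<Longrightarrow> m \<in> U \<and> w \<in> W \<and> mutually_acceptable p m w"
  unfolding is_matching_def by blast

lemma stable_is_matching: "stable U W p M \<Longrightarrow> is_matching U W p M"
  unfolding stable_def by blast

lemma is_matching_converse: "is_matching U W p M \<Longrightarrow> is_matching W U p (converse M)"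
  unfolding is_matching_def mutually_acceptable_def by blast

lemma matched_converse [simp]: "matched (converse M) a = matched M a"
  unfolding matched_def by auto

lemma blocks_converse: "blocks W U p (converse M) w m = blocks U W p M m w"
  unfolding blocks_def mutually_acceptable_def by auto

lemma stable_converse: "stable U W p M \<Longrightarrow> stable W U p (converse M)"
  unfolding stable_def using is_matching_converse blocks_converse by metis

lemma ma_swap: "ma W U p = ma U W p"
proof -
  have "ma U W p \<subseteq> ma W U p" for U W :: "'a set"
  proof
    fix a assume "a \<in> ma U W p"
    then obtain M where "stable U W p M" "matched M a" unfolding ma_def by blast
    then have "stable W U p (converse M)" "matched (converse M) a"
      by (simp_all add: stable_converse)
    then show "a \<in> ma W U p" unfolding ma_def by blast
  qed
  then show ?thesis by blast
qed

subsection \<open>Existence of stable matchings\<close>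

text \<open>Deferred acceptance, with the set \<open>R\<close> of rejected (man, woman) pairs as its state: every
  man proposes to the first woman on his list who has not rejected him, and each woman rejects
  every proposer who is unacceptable to her or beaten by another proposer.\<close>

definition proposal :: "('a \<Rightarrow> 'a list) \<Rightarrow> ('a \<times> 'a) set \<Rightarrow> 'a \<Rightarrow> 'a option" where
  "proposal p R m = find (\<lambda>w. (m, w) \<notin> R) (p m)"

definition rejects :: "'a set \<Rightarrow> ('a \<Rightarrow> 'a list) \<Rightarrow> ('a \<times> 'a) set \<Rightarrow> 'a \<Rightarrow> 'a \<Rightarrow> bool" where
  "rejects U p R m w \<longleftrightarrow> m \<in> U \<and> proposal p R m = Some w \<and>
     (m \<notin> set (p w) \<or> (\<exists>m'\<in>U. proposal p R m' = Some w \<and> prefers p w m' m))"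

definition rejection_step :: "'a set \<Rightarrow> ('a \<Rightarrow> 'a list) \<Rightarrow> ('a \<times> 'a) set \<Rightarrow> ('a \<times> 'a) set" where
  "rejection_step U p R = R \<union> {(m, w). rejects U p R m w}"

definition justified_rejections :: "'a set \<Rightarrow> ('a \<Rightarrow> 'a list) \<Rightarrow> ('a \<times> 'a) set \<Rightarrow> bool" where
  "justified_rejections U p R \<longleftrightarrow> (\<forall>(m, w)\<in>R. m \<in> U \<and> w \<in> set (p m) \<and>
     (m \<in> set (p w) \<longrightarrow> (\<exists>b\<in>U. proposal p R b = Some w \<and> prefers p w b m)))"

lemma proposal_SomeD: "proposal p R m = Some w \<Longrightarrow> w \<in> set (p m) \<and> (m, w) \<notin> R"
  unfolding proposal_def by (auto simp: find_Some_iff)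

lemma proposal_NoneD: "proposal p R m = None \<Longrightarrow> w \<in> set (p m) \<Longrightarrow> (m, w) \<in> R"
  unfolding proposal_def find_None_iff by blast

lemma proposal_mono:
  assumes "proposal p R m = Some w" "R \<subseteq> R'" "(m, w) \<notin> R'"
  shows "proposal p R' m = Some w"
proof -
  from assms(1) obtain i where "i < length (p m)" "w = p m ! i" "\<forall>j<i. (m, p m ! j) \<in> R"
    unfolding proposal_def find_Some_iff by auto
  then show ?thesis unfolding proposal_def find_Some_iff using assms(2,3) by blast
qed

lemma proposal_preferred_rejected:
  assumes "proposal p R m = Some w'" "distinct (p m)" "prefers p m w w'"
  shows "(m, w) \<in> R"
proof -
  from assms(1) obtain k where k: "k < length (p m)" "w' = p m ! k" "\<forall>j<k. (m, p m ! j) \<in> R"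
    unfolding proposal_def find_Some_iff by auto
  from assms(3) obtain i j where ij: "i < j" "j < length (p m)" "p m ! i = w" "p m ! j = w'"
    unfolding prefers_def by blast
  have "j = k" using nth_eq_iff_index_eq[OF assms(2) ij(2) k(1)] ij(4) k(2) by simp
  then show ?thesis using k(3) ij by auto
qed

lemma rejection_step_subset: "R \<subseteq> rejection_step U p R"
  unfolding rejection_step_def by blast

lemma favourite_proposal_survives:
  assumes "proposal p R b = Some w" "b \<in> set (p w)"
    and "\<forall>b'\<in>U. proposal p R b' = Some w \<longrightarrow> \<not> prefers p w b' b"
  shows "proposal p (rejection_step U p R) b = Some w"
proof -
  have "\<not> rejects U p R b w" unfolding rejects_def using assms(2,3) by blast
  moreover have "(b, w) \<notin> R" using proposal_SomeD[OF assms(1)] by blast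
  ultimately have "(b, w) \<notin> rejection_step U p R" by (simp add: rejection_step_def)
  then show ?thesis using proposal_mono[OF assms(1) rejection_step_subset] by blast
qed

lemma better_proposal_persists:
  assumes inst: "smi_instance U W p" and wW: "w \<in> W"
    and c: "c \<in> U" "proposal p R c = Some w" "prefers p w c m"
  shows "\<exists>b\<in>U. proposal p (rejection_step U p R) b = Some w \<and> prefers p w b m"
proof -
  have dw: "distinct (p w)" using smi_instance_distinct[OF inst] wW by blast
  define A where "A = {b \<in> U. proposal p R b = Some w \<and> b \<in> set (p w)}"
  have cA: "c \<in> A" using c prefers_set[OF c(3)] unfolding A_def by blast
  obtain b where bA: "b \<in> A" and b_max: "\<forall>b'\<in>A. \<not> prefers p w b' b"
    using prefers_maximal[of p w c A] dw cA unfolding A_def by blast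
  have "prefers p w b m"
  proof (cases "b = c")
    case False
    have "b \<in> set (p w)" "c \<in> set (p w)" using bA cA unfolding A_def by blast+
    then have "prefers p w b c" using False b_max cA prefers_total[of b p w c] by blast
    then show ?thesis using prefers_trans[OF dw _ c(3)] by blast
  qed (use c in simp)
  moreover have "proposal p (rejection_step U p R) b = Some w"
  proof (rule favourite_proposal_survives)
    show "proposal p R b = Some w" "b \<in> set (p w)" using bA unfolding A_def by blast+
    show "\<forall>b'\<in>U. proposal p R b' = Some w \<longrightarrow> \<not> prefers p w b' b"
    proof (intro ballI impI notI)
      fix b' assume "b' \<in> U" "proposal p R b' = Some w" "prefers p w b' b"
      then have "b' \<in> A" using prefers_set[of p w b' b] unfolding A_def by blast
      then show False using b_max \<open>prefers p w b' b\<close> by blast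
    qed
  qed
  ultimately show ?thesis using bA unfolding A_def by blast
qed

lemma justified_rejections_step:
  assumes inst: "smi_instance U W p" and just: "justified_rejections U p R"
  shows "justified_rejections U p (rejection_step U p R)"
  unfolding justified_rejections_def
proof (intro ballI, clarify)
  fix m w assume "(m, w) \<in> rejection_step U p R"
  then consider "(m, w) \<in> R" | "rejects U p R m w" unfolding rejection_step_def by blast
  then have mU: "m \<in> U" and wm: "w \<in> set (p m)" and
    better: "m \<in> set (p w) \<Longrightarrow> \<exists>c\<in>U. proposal p R c = Some w \<and> prefers p w c m"
    using just proposal_SomeD[of p R m w] unfolding justified_rejections_def rejects_def
    by (cases; blast)+
  have wW: "w \<in> W" using smi_instance_pref_men[OF inst mU] wm by blast
  show "m \<in> U \<and> w \<in> set (p m) \<and> (m \<in> set (p w) \<longrightarrow>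
          (\<exists>b\<in>U. proposal p (rejection_step U p R) b = Some w \<and> prefers p w b m))"
    using mU wm better better_proposal_persists[OF inst wW] by blast
qed

lemma rejection_fixpoint_accepts:
  assumes "rejection_step U p R = R" "m \<in> U" "proposal p R m = Some w"
  shows "m \<in> set (p w) \<and> (\<forall>m'\<in>U. proposal p R m' = Some w \<longrightarrow> \<not> prefers p w m' m)"
proof -
  have "\<not> rejects U p R m w"
    using assms proposal_SomeD[of p R m w] unfolding rejection_step_def by blast
  then show ?thesis using assms(2,3) unfolding rejects_def by blast
qed

lemma stable_of_rejection_fixpoint:
  assumes inst: "smi_instance U W p" and just: "justified_rejections U p R"
    and fixp: "rejection_step U p R = R"
  shows "stable U W p {(m, w). m \<in> U \<and> proposal p R m = Some w}"
    (is "stable U W p ?M")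
proof -
  note accepts = rejection_fixpoint_accepts[OF fixp]
  have unique_man: "m = m'" if "(m, w) \<in> ?M" "(m', w) \<in> ?M" for m m' w
    using that accepts[of m w] accepts[of m' w] prefers_total[of m p w m'] by blast
  have "?M \<subseteq> U \<times> W"
    using smi_instance_pref_men[OF inst] proposal_SomeD[of p R] by blast
  then have matching: "is_matching U W p ?M"
    unfolding is_matching_def mutually_acceptable_def
    using accepts unique_man proposal_SomeD[of p R] by auto
  have "\<not> blocks U W p ?M m w" for m w
  proof
    assume bl: "blocks U W p ?M m w"
    then have mU: "m \<in> U" and wW: "w \<in> W" and wm: "w \<in> set (p m)" and mw: "m \<in> set (p w)"
      by (simp_all add: blocks_def mutually_acceptable_def)
    have "(m, w) \<in> R"
    proof (cases "proposal p R m")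
      case None
      then show ?thesis using proposal_NoneD[of p R m w] wm by blast
    next
      case (Some w')
      then have "(m, w') \<in> ?M" using mU by blast
      then have "matched ?M m" unfolding matched_def by blast
      then obtain w'' where "(m, w'') \<in> ?M" "prefers p m w w''"
        using bl unfolding blocks_def by blast
      then have "prefers p m w w'" using Some by simp
      then show ?thesis
        using proposal_preferred_rejected[OF Some] smi_instance_distinct[OF inst] mU by blast
    qed
    then obtain b where b: "b \<in> U" "proposal p R b = Some w" "prefers p w b m"
      using just mw unfolding justified_rejections_def by blast
    then have "matched ?M w" unfolding matched_def by blast
    then obtain m' where m': "(m', w) \<in> ?M" "prefers p w m m'"
      using bl unfolding blocks_def by blast
    then have "m' = b" using unique_man b by blast
    then show False
      using prefers_asym[of p w b m] m'(2) b(3) smi_instance_distinct[OF inst] wW by blast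
  qed
  then show ?thesis using matching unfolding stable_def by blast
qed

lemma stable_matching_exists:
  assumes inst: "smi_instance U W p"
  shows "\<exists>M. stable U W p M"
proof -
  define A where "A = Sigma U (\<lambda>m. set (p m))"
  have "finite U" using inst unfolding smi_instance_def by blast
  then have "finite A" unfolding A_def by (simp add: finite_SigmaI)
  have "\<exists>M. stable U W p M" if "justified_rejections U p R" for R
    using that
  proof (induction "card (A - R)" arbitrary: R rule: less_induct)
    case less
    show ?case
    proof (cases "rejection_step U p R = R")
      case True
      then show ?thesis using stable_of_rejection_fixpoint[OF inst less.prems] by blast
    next
      case False
      have just': "justified_rejections U p (rejection_step U p R)"
        using justified_rejections_step[OF inst less.prems] .
      have "rejection_step U p R \<subseteq> A"
      proof (rule subrelI)
        fix m w assume "(m, w) \<in> rejection_step U p R"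
        then show "(m, w) \<in> A" using just' unfolding justified_rejections_def A_def by blast
      qed
      then have "A - rejection_step U p R \<subset> A - R"
        using False rejection_step_subset[of R U p] by blast
      then have "card (A - rejection_step U p R) < card (A - R)"
        using \<open>finite A\<close> by (simp add: psubset_card_mono)
      then show ?thesis using less.hyps just' by blast
    qed
  qed
  moreover have "justified_rejections U p {}" unfolding justified_rejections_def by blast
  ultimately show ?thesis by blast
qed

definition partner :: "('a \<times> 'a) set \<Rightarrow> 'a \<Rightarrow> 'a" where
  "partner M x = (THE y. (x, y) \<in> M)"

lemma partner_eq: "is_matching U W p M \<Longrightarrow> (x, y) \<in> M \<Longrightarrow> partner M x = y"
  unfolding partner_def by (rule the_equality) (auto dest: matching_unique_woman)

lemma partner_converse_eq: "is_matching U W p M \<Longrightarrow> (y, x) \<in> M \<Longrightarrow> partner (converse M) x = y"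
  using partner_eq[OF is_matching_converse] by (metis converse_iff)

lemma matched_partner:
  assumes "is_matching U W p M" "U \<inter> W = {}" "m \<in> U" "matched M m"
  shows "(m, partner M m) \<in> M"
proof -
  from assms(4) obtain b where "(m, b) \<in> M \<or> (b, m) \<in> M" unfolding matched_def by blast
  moreover have "(b, m) \<notin> M" using assms(2,3) matching_memD[OF assms(1), of b m] by blast
  ultimately show ?thesis using partner_eq[OF assms(1)] by auto
qed

lemma stable_partner_preferred:
  assumes inst: "smi_instance U W p" and st: "stable U W p M"
    and xU: "x \<in> U" and wW: "w \<in> W" and acc: "mutually_acceptable p x w"
    and improves: "\<not> matched M x \<or> (\<exists>w0. (x, w0) \<in> M \<and> prefers p x w w0)"
  shows "\<exists>y. (y, w) \<in> M \<and> prefers p w y x"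
proof -
  have ism: "is_matching U W p M" and nb: "\<not> blocks U W p M x w"
    using st unfolding stable_def by blast+
  have "matched M w" and not_x: "\<And>y. (y, w) \<in> M \<Longrightarrow> \<not> prefers p w x y"
    using nb xU wW acc improves by (auto simp only: blocks_def)
  have disj: "U \<inter> W = {}" using inst unfolding smi_instance_def by blast
  have yw: "(partner (converse M) w, w) \<in> M"
    using matched_partner[OF is_matching_converse[OF ism]] disj wW \<open>matched M w\<close>
    by (metis Int_commute converse_iff matched_converse)
  define y where "y = partner (converse M) w"
  have "y \<noteq> x"
  proof
    assume "y = x"
    with yw have "(x, w) \<in> M" unfolding y_def by simp
    moreover from this improves obtain w0 where "(x, w0) \<in> M" "prefers p x w w0"
      unfolding matched_def by blast
    ultimately have "prefers p x w w" using matching_unique_woman[OF ism] by blast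
    moreover have "distinct (p x)" using smi_instance_distinct[OF inst] xU by blast
    ultimately show False using prefers_irrefl by fast
  qed
  moreover have "y \<in> set (p w)" "x \<in> set (p w)"
    using matching_memD[OF ism yw] acc unfolding mutually_acceptable_def y_def by auto
  ultimately have "prefers p w y x" using not_x[OF yw[folded y_def]] prefers_total[of y p w x] by blast
  then show ?thesis using yw unfolding y_def by blast
qed

lemma stable_partner_preferred_dual:
  assumes "smi_instance U W p" "stable U W p M" "y \<in> U" "w \<in> W" "mutually_acceptable p y w"
    and "\<not> matched M w \<or> (\<exists>m0. (m0, w) \<in> M \<and> prefers p w y m0)"
  shows "\<exists>w'. (y, w') \<in> M \<and> prefers p y w' w"
proof -
  have "mutually_acceptable p w y" using assms(5) unfolding mutually_acceptable_def by blast
  moreover have "\<not> matched (converse M) w \<or> (\<exists>m0. (w, m0) \<in> converse M \<and> prefers p w y m0)"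
    using assms(6) by simp
  ultimately show ?thesis
    using stable_partner_preferred[OF smi_instance_swap[OF assms(1)] stable_converse[OF assms(2)]
        assms(4,3)] by simp
qed

subsection \<open>Alternating walks\<close>

definition walk :: "('a \<times> 'a) set \<Rightarrow> ('a \<times> 'a) set \<Rightarrow> 'a \<Rightarrow> nat \<Rightarrow> 'a" where
  "walk M M' x0 k = ((\<lambda>x. partner (converse M) (partner M' x)) ^^ k) x0"

lemma walk_0 [simp]: "walk M M' x0 0 = x0"
  by (simp add: walk_def)

lemma walk_Suc [simp]: "walk M M' x0 (Suc k) = partner (converse M) (partner M' (walk M M' x0 k))"
  by (simp add: walk_def)

definition alternating_walk :: "('a \<times> 'a) set \<Rightarrow> ('a \<times> 'a) set \<Rightarrow> 'a \<Rightarrow> nat \<Rightarrow> bool" where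
  "alternating_walk M M' x0 k \<longleftrightarrow> \<not> matched M x0 \<and>
     (\<forall>j<k. (walk M M' x0 j, partner M' (walk M M' x0 j)) \<in> M' \<and>
            (walk M M' x0 (Suc j), partner M' (walk M M' x0 j)) \<in> M)"

lemma alternating_walk_Suc:
  "alternating_walk M M' x0 (Suc k) \<longleftrightarrow> alternating_walk M M' x0 k \<and>
     (walk M M' x0 k, partner M' (walk M M' x0 k)) \<in> M' \<and>
     (walk M M' x0 (Suc k), partner M' (walk M M' x0 k)) \<in> M"
  unfolding alternating_walk_def by (auto simp: less_Suc_eq)

text \<open>An alternating walk can be retraced from its endpoint, since each of its edges is an edge
  of a matching and its start is unmatched in \<open>M\<close>.\<close>

lemma alternating_walk_injective:
  assumes M: "is_matching U W p M" and M': "is_matching U W p' M'"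
  shows "alternating_walk M M' x0 i \<Longrightarrow> alternating_walk M M' y0 j \<Longrightarrow>
    walk M M' x0 i = walk M M' y0 j \<Longrightarrow> x0 = y0 \<and> i = j"
proof (induction i arbitrary: j)
  case 0
  show ?case
  proof (cases j)
    case (Suc j')
    then have "matched M x0"
      using "0.prems"(2,3) unfolding matched_def by (auto simp: alternating_walk_Suc)
    then show ?thesis using "0.prems"(1) unfolding alternating_walk_def by blast
  qed (use "0.prems"(3) in simp)
next
  case (Suc i)
  show ?case
  proof (cases j)
    case 0
    then have "matched M y0"
      using Suc.prems(1,3) unfolding alternating_walk_Suc matched_def by auto
    then show ?thesis using Suc.prems(2) unfolding alternating_walk_def by blast
  next
    case (Suc j')
    let ?x = "walk M M' x0 i" and ?y = "walk M M' y0 j'"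
    have x: "alternating_walk M M' x0 i" "(?x, partner M' ?x) \<in> M'"
        "(walk M M' x0 (Suc i), partner M' ?x) \<in> M"
      using Suc.prems(1) unfolding alternating_walk_Suc by blast+
    have y: "alternating_walk M M' y0 j'" "(?y, partner M' ?y) \<in> M'"
        "(walk M M' y0 (Suc j'), partner M' ?y) \<in> M"
      using Suc.prems(2) \<open>j = Suc j'\<close> by (simp_all add: alternating_walk_Suc)
    have "partner M' ?x = partner M' ?y"
      using matching_unique_woman[OF M x(3)] y(3) Suc.prems(3) \<open>j = Suc j'\<close> by simp
    then have "?x = ?y" using matching_unique_man[OF M' x(2)] y(2) by simp
    then show ?thesis using Suc.IH[OF x(1) y(1)] \<open>j = Suc j'\<close> by simp
  qed
qed

definition prefers_partner :: "('a \<Rightarrow> 'a list) \<Rightarrow> ('a \<times> 'a) set \<Rightarrow> ('a \<times> 'a) set \<Rightarrow> 'a \<Rightarrow> bool" where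
  "prefers_partner p M M' x \<longleftrightarrow> (x, partner M' x) \<in> M' \<and>
     (\<not> matched M x \<or> (\<exists>w. (x, w) \<in> M \<and> prefers p x (partner M' x) w))"

context
  fixes U W S :: "'a set" and p p' :: "'a \<Rightarrow> 'a list" and M M' :: "('a \<times> 'a) set"
  assumes inst: "smi_instance U W p" and inst': "smi_instance U W p'"
    and unchanged: "\<forall>a. a \<notin> S \<longrightarrow> p' a = p a"
    and stable: "stable U W p M" and stable': "stable U W p' M'"
begin

lemma walk_prefers_partner:
  assumes x0: "x0 \<in> U" "\<not> matched M x0" "matched M' x0"
  shows "\<forall>i<k. walk M M' x0 i \<notin> S \<and> partner M' (walk M M' x0 i) \<notin> S \<Longrightarrow>
    alternating_walk M M' x0 k \<and> walk M M' x0 k \<in> U \<and>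
    (walk M M' x0 k \<notin> S \<longrightarrow> prefers_partner p M M' (walk M M' x0 k))"
proof (induction k)
  case 0
  have "(x0, partner M' x0) \<in> M'"
    using matched_partner[OF stable_is_matching[OF stable'] smi_instance_disjoint[OF inst] x0(1,3)] .
  then show ?case using x0 unfolding alternating_walk_def prefers_partner_def by simp
next
  case (Suc k)
  define x where "x = walk M M' x0 k"
  define w where "w = partner M' x"
  have xS: "x \<notin> S" and wS: "w \<notin> S" using Suc.prems unfolding x_def w_def by simp_all
  then have IH: "alternating_walk M M' x0 k" "x \<in> U" "prefers_partner p M M' x"
    using Suc.IH Suc.prems unfolding x_def by simp_all
  then have xw: "(x, w) \<in> M'" and improves: "\<not> matched M x \<or> (\<exists>w0. (x, w0) \<in> M \<and> prefers p x w w0)"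
    unfolding prefers_partner_def w_def by blast+
  have wW: "w \<in> W" and "mutually_acceptable p' x w"
    using matching_memD[OF stable_is_matching[OF stable'] xw] by blast+
  then have "mutually_acceptable p x w"
    using mutually_acceptable_cong[of p' x p w] unchanged xS wS by simp
  then obtain y where yw: "(y, w) \<in> M" and wy: "prefers p w y x"
    using stable_partner_preferred[OF inst stable \<open>x \<in> U\<close> wW _ improves] by blast
  have next_y: "walk M M' x0 (Suc k) = y"
    using partner_converse_eq[OF stable_is_matching[OF stable] yw] unfolding x_def w_def by simp
  have yU: "y \<in> U" and "mutually_acceptable p y w"
    using matching_memD[OF stable_is_matching[OF stable] yw] by blast+
  have "alternating_walk M M' x0 (Suc k)"
    using IH(1) xw yw next_y unfolding alternating_walk_Suc x_def w_def by simp
  moreover have "prefers_partner p M M' y" if yS: "y \<notin> S"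
  proof -
    have "mutually_acceptable p' y w"
      using \<open>mutually_acceptable p y w\<close> mutually_acceptable_cong[of p' y p w] unchanged yS wS by simp
    moreover have "prefers p' w y x" using wy prefers_cong[of p' w p] unchanged wS by simp
    ultimately obtain w' where yw': "(y, w') \<in> M'" and "prefers p' y w' w"
      using stable_partner_preferred_dual[OF inst' stable' yU wW] xw by blast
    then have "prefers p y w' w" using prefers_cong[of p' y p] unchanged yS by simp
    moreover have "partner M' y = w'" using partner_eq[OF stable_is_matching[OF stable'] yw'] .
    ultimately show ?thesis using yw yw' unfolding prefers_partner_def by blast
  qed
  ultimately show ?case using next_y yU by simp
qed

lemma walk_reaches_changed_agent:
  assumes x0: "x0 \<in> U" "\<not> matched M x0" "matched M' x0"
  obtains k where "walk M M' x0 k \<in> S \<or> partner M' (walk M M' x0 k) \<in> S"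
    and "alternating_walk M M' x0 k" and "walk M M' x0 k \<in> U"
    and "walk M M' x0 k \<notin> S \<Longrightarrow> (walk M M' x0 k, partner M' (walk M M' x0 k)) \<in> M'"
proof -
  define hits where "hits k \<longleftrightarrow> walk M M' x0 k \<in> S \<or> partner M' (walk M M' x0 k) \<in> S" for k
  have "\<exists>k. hits k"
  proof (rule ccontr)
    assume "\<nexists>k. hits k"
    then have walks: "alternating_walk M M' x0 k \<and> walk M M' x0 k \<in> U" for k
      using walk_prefers_partner[OF x0, of k] unfolding hits_def by blast
    have "inj (walk M M' x0)"
    proof (rule injI)
      fix i j assume "walk M M' x0 i = walk M M' x0 j"
      then show "i = j"
        using alternating_walk_injective[OF stable_is_matching[OF stable] stable_is_matching[OF stable']]
          walks by blast
    qed
    then have "infinite (range (walk M M' x0))"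
      using finite_imageD infinite_UNIV_nat by blast
    moreover have "range (walk M M' x0) \<subseteq> U" using walks by blast
    moreover have "finite U" using inst unfolding smi_instance_def by blast
    ultimately show False using finite_subset by blast
  qed
  then obtain k where "hits k" and "\<forall>i<k. \<not> hits i" using exists_least_iff[of hits] by blast
  then show thesis
    using that walk_prefers_partner[OF x0, of k] unfolding hits_def prefers_partner_def by blast
qed

end

subsection \<open>Newly matched agents\<close>

lemma rural_hospitals_men:
  assumes "smi_instance U W p" "stable U W p M" "stable U W p M'" "m \<in> U" "matched M' m"
  shows "matched M m"
proof (rule ccontr)
  assume "\<not> matched M m"
  moreover have "\<forall>a. a \<notin> {} \<longrightarrow> p a = p a" by simp
  ultimately obtain k where "walk M M' m k \<in> {} \<or> partner M' (walk M M' m k) \<in> {}"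
    using walk_reaches_changed_agent[OF assms(1,1) _ assms(2,3,4) _ assms(5)] by blast
  then show False by blast
qed

lemma matching_self_or_partner_unique:
  assumes "is_matching U W p M" "U \<inter> W = {}" "a \<in> U" "b \<in> U"
    and "a = c \<or> (a, c) \<in> M" "b = c \<or> (b, c) \<in> M"
  shows "a = b"
  using assms matching_memD[OF assms(1), of a c] matching_memD[OF assms(1), of b c]
    matching_unique_man[OF assms(1), of a c b] by blast

lemma newly_matched_man_unique:
  assumes inst: "smi_instance U W p" and inst': "smi_instance U W p'"
    and unchanged: "\<forall>a. a \<noteq> c \<longrightarrow> p' a = p a"
    and m1: "m1 \<in> U" "m1 \<notin> ma U W p" "m1 \<in> ma U W p'"
    and m2: "m2 \<in> U" "m2 \<notin> ma U W p" "m2 \<in> ma U W p'"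
  shows "m1 = m2"
proof -
  obtain M where M: "stable U W p M" using stable_matching_exists[OF inst] by blast
  obtain M' where M': "stable U W p' M'" "matched M' m1" using m1(3) unfolding ma_def by blast
  obtain M2 where "stable U W p' M2" "matched M2 m2" using m2(3) unfolding ma_def by blast
  then have "matched M' m2" using rural_hospitals_men[OF inst' M'(1)] m2(1) by blast
  have "\<not> matched M m1" "\<not> matched M m2" using M m1(2) m2(2) unfolding ma_def by blast+
  have unchanged': "\<forall>a. a \<notin> {c} \<longrightarrow> p' a = p a" using unchanged by blast
  note reach = walk_reaches_changed_agent[OF inst inst' unchanged' M M'(1)]
  obtain k1 where k1: "walk M M' m1 k1 = c \<or> (walk M M' m1 k1, c) \<in> M'"
      "alternating_walk M M' m1 k1" "walk M M' m1 k1 \<in> U"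
    using reach[OF m1(1) \<open>\<not> matched M m1\<close> M'(2)] by (metis singletonD singletonI)
  obtain k2 where k2: "walk M M' m2 k2 = c \<or> (walk M M' m2 k2, c) \<in> M'"
      "alternating_walk M M' m2 k2" "walk M M' m2 k2 \<in> U"
    using reach[OF m2(1) \<open>\<not> matched M m2\<close> \<open>matched M' m2\<close>] by (metis singletonD singletonI)
  have "walk M M' m1 k1 = walk M M' m2 k2"
    using matching_self_or_partner_unique[OF stable_is_matching[OF M'(1)]
        smi_instance_disjoint[OF inst] k1(3) k2(3) k1(1) k2(1)] .
  then show ?thesis
    using alternating_walk_injective[OF stable_is_matching[OF M] stable_is_matching[OF M'(1)]
        k1(2) k2(2)] by blast
qed

theorem mainTheorem9:
  fixes U W :: "'a set" and pref :: "'a \<Rightarrow> 'a list" and astar :: 'a and L :: "'a list"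
  assumes "smi_instance U W pref"
    and "astar \<in> U \<union> W"
    and "distinct L"
    and "set L \<subseteq> (if astar \<in> U then W else U)"
  shows "(\<forall>m1\<in>U. \<forall>m2\<in>U.
            m1 \<notin> ma U W pref \<and> m1 \<in> ma U W (pref(astar := L)) \<and>
            m2 \<notin> ma U W pref \<and> m2 \<in> ma U W (pref(astar := L)) \<longrightarrow> m1 = m2) \<and>
         (\<forall>w1\<in>W. \<forall>w2\<in>W.
            w1 \<notin> ma U W pref \<and> w1 \<in> ma U W (pref(astar := L)) \<and>
            w2 \<notin> ma U W pref \<and> w2 \<in> ma U W (pref(astar := L)) \<longrightarrow> w1 = w2)"
proof -
  let ?pref' = "pref(astar := L)"
  have inst: "smi_instance U W pref" by fact
  have inst': "smi_instance U W ?pref'" using smi_instance_update[OF inst assms(3,4)] .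
  have unchanged: "\<forall>a. a \<noteq> astar \<longrightarrow> ?pref' a = pref a" by simp
  show ?thesis
  proof (intro conjI ballI impI)
    fix m1 m2 assume "m1 \<in> U" "m2 \<in> U" "m1 \<notin> ma U W pref \<and> m1 \<in> ma U W ?pref' \<and>
      m2 \<notin> ma U W pref \<and> m2 \<in> ma U W ?pref'"
    then show "m1 = m2" using newly_matched_man_unique[OF inst inst' unchanged] by blast
  next
    fix w1 w2 assume "w1 \<in> W" "w2 \<in> W" "w1 \<notin> ma U W pref \<and> w1 \<in> ma U W ?pref' \<and>
      w2 \<notin> ma U W pref \<and> w2 \<in> ma U W ?pref'"
    then show "w1 = w2"
      using newly_matched_man_unique[OF smi_instance_swap[OF inst] smi_instance_swap[OF inst']
          unchanged] by (simp only: ma_swap) blast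
  qed
qed

end
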